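(* For two coprime natural numbers $a$ and $b$, \[ \alpha(\{a, b\}) = \frac{\lfloor \frac{a+b}{2} \rfloor}{a+b}. \]
   Context: For a finite $D \subset \mathbb{N} = \{1,2,\ldots\}$ and $n \geq 1$, the circulant graph $G_n$ with set of distances $D$ has vertex set $\{0, \ldots, n-1\}$, vertices $u, v$ (possibly equal) being adjacent iff $u - v \equiv d$ or $v - u \equiv d \pmod n$ for some $d \in D$. $\alpha(G)$ is the maximum size of an independent set (no two adjacent vertices, no looped vertex), and $\alpha(D) := \lim_{n\to\infty} \alpha(G_n)/n$ (which exists). *)

theory Defs
  imports Complex_Main
begin

definition circ_adj :: "nat set \<Rightarrow> nat \<Rightarrow> nat \<Rightarrow> nat \<Rightarrow> bool" where
  "circ_adj D n u v \<longleftrightarrow>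
     (\<exists>d\<in>D. (int u - int v) mod int n = int d mod int n
           \<or> (int v - int u) mod int n = int d mod int n)"

text \<open>Independent set: no two (not necessarily distinct) vertices adjacent;
  in particular no looped vertex.\<close>
definition circ_indep :: "nat set \<Rightarrow> nat \<Rightarrow> nat set \<Rightarrow> bool" where
  "circ_indep D n S \<longleftrightarrow> S \<subseteq> {0..<n} \<and> (\<forall>u\<in>S. \<forall>v\<in>S. \<not> circ_adj D n u v)"

definition circ_alpha :: "nat set \<Rightarrow> nat \<Rightarrow> nat" where
  "circ_alpha D n = Max (card ` {S. circ_indep D n S})"

end

theory Submission
  imports Defs
begin

text \<open>Upper bound: the shift v \<mapsto> v + b, taken cyclically on a window of a + b consecutive
  vertices, moves every vertex to a neighbour, so an independent set fills at most half of
  each such window. Lower bound: modulo a + b the distance a equals -b and b generates the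
  residues, so the circulant graph on a + b vertices is a cycle; every second vertex along
  it is an independent set of size (a + b) div 2, and repeating it periodically (leaving the
  last period empty so that no step wraps around modulo n) gives one on n vertices. Both
  bounds are within O(a + b) of n ((a + b) div 2) / (a + b).\<close>

lemma finite_circ_indep: "finite {S. circ_indep D n S}"
  by (rule finite_subset[of _ "Pow {0..<n}"]) (auto simp: circ_indep_def)

lemma card_le_circ_alpha: "circ_indep D n S \<Longrightarrow> card S \<le> circ_alpha D n"
  unfolding circ_alpha_def using finite_circ_indep by (auto intro: Max_ge)

lemma circ_alpha_le:
  assumes "\<And>S. circ_indep D n S \<Longrightarrow> card S \<le> m"
  shows "circ_alpha D n \<le> m"
proof -
  have "circ_indep D n {}" by (simp add: circ_indep_def)
  then show ?thesis
    unfolding circ_alpha_def using finite_circ_indep assms by (subst Max_le_iff) auto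
qed

lemma circ_indep_add_notin:
  assumes "circ_indep D n S" "d \<in> D" "u \<in> S"
  shows "u + d \<notin> S"
proof
  assume "u + d \<in> S"
  moreover have "circ_adj D n (u + d) u"
    using \<open>d \<in> D\<close> unfolding circ_adj_def by auto
  ultimately show False using assms unfolding circ_indep_def by blast
qed

lemma card_window_le:
  fixes S :: "nat set"
  assumes "\<And>u. u \<in> S \<Longrightarrow> u + a \<notin> S" and "\<And>u. u \<in> S \<Longrightarrow> u + b \<notin> S"
  shows "2 * card (S \<inter> {x..<x + (a + b)}) \<le> a + b"
proof -
  define W where "W = {x..<x + (a + b)}"
  define rot where "rot v = (if v < x + a then v + b else v - a)" for v
    \<comment> \<open>the shift by b, modulo a + b inside W\<close>
  have "inj_on rot W" unfolding inj_on_def rot_def W_def by auto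
  moreover have "rot ` (S \<inter> W) \<subseteq> W - S"
  proof
    fix w assume "w \<in> rot ` (S \<inter> W)"
    then obtain v where v: "v \<in> S" "v \<in> W" "w = rot v" by auto
    show "w \<in> W - S"
    proof (cases "v < x + a")
      case True
      then show ?thesis using v assms(2)[of v] by (auto simp: rot_def W_def)
    next
      case False
      then show ?thesis using v assms(1)[of "v - a"] by (auto simp: rot_def W_def)
    qed
  qed
  ultimately have "card (S \<inter> W) \<le> card (W - S)"
    by (intro card_inj_on_le[of rot]) (auto intro: inj_on_subset simp: W_def)
  also have "\<dots> = (a + b) - card (S \<inter> W)"
    by (simp add: card_Diff_subset_Int W_def Int_commute)
  finally show ?thesis unfolding W_def by linarith
qed

lemma card_Int_lessThan_mult_le:
  assumes "\<And>x. card (S \<inter> {x..<x + s}) \<le> k"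
  shows "card (S \<inter> {..<j * s}) \<le> j * k"
proof (induction j)
  case (Suc j)
  have "S \<inter> {..<Suc j * s} = (S \<inter> {..<j * s}) \<union> (S \<inter> {j * s..<j * s + s})"
    by auto
  then have "card (S \<inter> {..<Suc j * s}) \<le> card (S \<inter> {..<j * s}) + card (S \<inter> {j * s..<j * s + s})"
    by (simp add: card_Un_le)
  with Suc assms[of "j * s"] show ?case by simp
qed simp

lemma card_le_by_windows:
  assumes "S \<subseteq> {..<n}" and "\<And>x. card (S \<inter> {x..<x + s}) \<le> k"
  shows "card S \<le> n div s * k + n mod s"
proof -
  have "S \<subseteq> (S \<inter> {..<n div s * s}) \<union> {n div s * s..<n}"
    using assms(1) by auto
  then have "card S \<le> card (S \<inter> {..<n div s * s}) + card {n div s * s..<n}"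
    by (meson card_Un_le card_mono finite_Un finite_Int finite_atLeastLessThan finite_lessThan le_trans)
  moreover have "card {n div s * s..<n} = n mod s"
    by (simp add: minus_div_mult_eq_mod)
  ultimately show ?thesis
    using card_Int_lessThan_mult_le[OF assms(2), of "n div s"] by linarith
qed

lemma circ_alpha_pair_le:
  "circ_alpha {a, b} n \<le> n div (a + b) * ((a + b) div 2) + n mod (a + b)"
proof (rule circ_alpha_le)
  fix S assume S: "circ_indep {a, b} n S"
  show "card S \<le> n div (a + b) * ((a + b) div 2) + n mod (a + b)"
  proof (rule card_le_by_windows)
    show "S \<subseteq> {..<n}" using S by (auto simp: circ_indep_def)
    show "card (S \<inter> {x..<x + (a + b)}) \<le> (a + b) div 2" for x
      using card_window_le[of S a b x] circ_indep_add_notin[OF S] by auto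
  qed
qed

lemma coprime_dvd_mult_small_eq_0:
  fixes m z b :: int
  assumes "coprime b m" and "m dvd z * b" and "\<bar>z\<bar> < m"
  shows "z = 0"
proof (rule ccontr)
  assume "z \<noteq> 0"
  moreover have "m dvd z"
    using assms(1,2) by (simp add: coprime_commute coprime_dvd_mult_left_iff)
  ultimately have "\<bar>m\<bar> \<le> \<bar>z\<bar>" by (simp add: dvd_imp_le_int)
  with assms(3) show False by linarith
qed

lemma circ_adj_sum_iff:
  "circ_adj {a, b} (a + b) u v \<longleftrightarrow>
     int (a + b) dvd int u - int v - int b \<or> int (a + b) dvd int u - int v + int b"
proof -
  define s where "s = int (a + b)"
  define x where "x = int u - int v"
  have flip: "s dvd y - int a \<longleftrightarrow> s dvd y + int b" for y
  proof -
    have "s dvd (y - int a) + s \<longleftrightarrow> s dvd y - int a" by (rule dvd_add_left_iff) simp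
    then show ?thesis by (simp add: s_def algebra_simps)
  qed
  have "circ_adj {a, b} (a + b) u v \<longleftrightarrow>
      s dvd x - int a \<or> s dvd - x - int a \<or> s dvd x - int b \<or> s dvd - x - int b"
    unfolding circ_adj_def mod_eq_dvd_iff s_def x_def by auto
  also have "\<dots> \<longleftrightarrow> s dvd x - int b \<or> s dvd x + int b"
    using flip[of x] flip[of "- x"] dvd_minus_iff[of s "x - int b"] dvd_minus_iff[of s "x + int b"]
    by (auto simp: algebra_simps)
  finally show ?thesis unfolding s_def x_def .
qed

lemma exists_circ_indep_half:
  assumes "coprime a b"
  shows "\<exists>F. circ_indep {a, b} (a + b) F \<and> card F = (a + b) div 2"
proof -
  define s where "s = a + b"
  define k where "k = s div 2"
  define g where "g i = 2 * i * b mod s" for i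
  have "coprime b s"
    using assms unfolding s_def by (metis coprime_commute coprime_iff_gcd_eq_1 gcd_add1)
  then have "coprime (int b) (int s)"
    by (simp only: coprime_int_iff)
  then have small: "z = 0" if "int s dvd z * int b" "\<bar>z\<bar> < int s" for z
    using coprime_dvd_mult_small_eq_0 that by blast
  have g_cong: "int s dvd int (g i) - int (g j) - (2 * int i - 2 * int j) * int b" for i j
  proof -
    have "int s dvd int (g i) - 2 * int i * int b" "int s dvd int (g j) - 2 * int j * int b"
      unfolding g_def by (simp_all add: of_nat_mod mod_eq_dvd_iff[symmetric])
    from dvd_diff[OF this] show ?thesis by (simp add: algebra_simps)
  qed
  have "inj_on g {..<k}"
  proof (rule inj_onI)
    fix i j assume "i \<in> {..<k}" "j \<in> {..<k}" "g i = g j"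
    then have "int s dvd (2 * int i - 2 * int j) * int b" "\<bar>2 * int i - 2 * int j\<bar> < int s"
      using g_cong[of i j] by (auto simp: k_def)
    then show "i = j" using small by fastforce
  qed
  moreover have "\<not> circ_adj {a, b} s (g i) (g j)" if "i < k" "j < k" for i j
  proof
    assume "circ_adj {a, b} s (g i) (g j)"
    then have "int s dvd int (g i) - int (g j) - 1 * int b
        \<or> int s dvd int (g i) - int (g j) - (- 1) * int b"
      unfolding s_def circ_adj_sum_iff by simp
    then obtain e :: int where "e = 1 \<or> e = - 1" "int s dvd int (g i) - int (g j) - e * int b"
      by blast
    from dvd_diff[OF this(2) g_cong[of i j]]
    have "int s dvd (2 * int i - 2 * int j - e) * int b"
      by (simp add: algebra_simps)
    moreover have "\<bar>2 * int i - 2 * int j - e\<bar> < int s"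
      using that \<open>e = 1 \<or> e = - 1\<close> by (auto simp: k_def)
    ultimately have "2 * int i - 2 * int j - e = 0" using small by blast
    with \<open>e = 1 \<or> e = - 1\<close> show False by presburger
  qed
  moreover have "g i < s" if "i < k" for i
    using that by (auto simp: g_def k_def)
  ultimately have "circ_indep {a, b} s (g ` {..<k}) \<and> card (g ` {..<k}) = k"
    by (auto simp: circ_indep_def card_image)
  then show ?thesis unfolding s_def k_def by blast
qed

lemma card_periodic_set:
  assumes "F \<subseteq> {..<s}"
  shows "card {x. x < m * s \<and> x mod s \<in> F} = m * card F"
proof -
  have "{x. x < m * s \<and> x mod s \<in> F} = (\<lambda>(i, r). i * s + r) ` ({..<m} \<times> F)"
  proof (intro set_eqI iffI)
    fix x assume x: "x \<in> {x. x < m * s \<and> x mod s \<in> F}"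
    then have "x div s < m" by (simp add: less_mult_imp_div_less)
    with x show "x \<in> (\<lambda>(i, r). i * s + r) ` ({..<m} \<times> F)"
      by (auto intro!: image_eqI[of _ _ "(x div s, x mod s)"])
  next
    fix x assume "x \<in> (\<lambda>(i, r). i * s + r) ` ({..<m} \<times> F)"
    then obtain i r where "i < m" "r \<in> F" "x = i * s + r" by auto
    moreover have "r < s" using \<open>r \<in> F\<close> assms by auto
    moreover have "i * s + s \<le> m * s" using \<open>i < m\<close>
      by (metis add.commute mult_Suc mult_le_mono1 Suc_leI)
    ultimately show "x \<in> {x. x < m * s \<and> x mod s \<in> F}" by simp
  qed
  moreover have "inj_on (\<lambda>(i, r). i * s + r) ({..<m} \<times> F)"
  proof (rule inj_onI, clarify)
    fix i r i' r' assume "r \<in> F" "r' \<in> F" and eq: "i * s + r = i' * s + r'"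
    then have "r < s" "r' < s" using assms by auto
    then show "i = i' \<and> r = r'"
      using arg_cong[OF eq, of "\<lambda>x. x div s"] arg_cong[OF eq, of "\<lambda>x. x mod s"] by simp
  qed
  ultimately show ?thesis by (simp add: card_image card_cartesian_product)
qed

lemma circ_indep_periodic:
  assumes F: "circ_indep D s F" and "m * s \<le> n" and "\<And>d. d \<in> D \<Longrightarrow> m * s + d \<le> n"
  shows "circ_indep D n {x. x < m * s \<and> x mod s \<in> F}"
proof -
  let ?P = "{x. x < m * s \<and> x mod s \<in> F}"
  have no_step: "(int u - int v) mod int n \<noteq> int d mod int n"
    if "u \<in> ?P" "v \<in> ?P" "d \<in> D" for u v d
  proof
    assume "(int u - int v) mod int n = int d mod int n"
    then have "int u mod int n = int (v + d) mod int n"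
      by (simp add: mod_eq_dvd_iff algebra_simps)
    moreover have "u < n" "v + d < n"
      using that assms(2) assms(3)[of d] by auto
    ultimately have "u = v + d" by simp
    then have "circ_adj D s (u mod s) (v mod s)"
      unfolding circ_adj_def using \<open>d \<in> D\<close> by (auto simp: of_nat_mod mod_diff_eq)
    with F that show False unfolding circ_indep_def by blast
  qed
  have "?P \<subseteq> {0..<n}" using assms(2) by auto
  with no_step show ?thesis unfolding circ_indep_def circ_adj_def by blast
qed

lemma circ_alpha_pair_ge:
  assumes "coprime a b"
  shows "(n div (a + b) - 1) * ((a + b) div 2) \<le> circ_alpha {a, b} n"
proof (cases "n div (a + b) = 0")
  case False
  define m where "m = n div (a + b) - 1"
  obtain F where F: "circ_indep {a, b} (a + b) F" "card F = (a + b) div 2"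
    using exists_circ_indep_half[OF assms] by blast
  have "Suc m = n div (a + b)" using False by (simp add: m_def)
  then have "m * (a + b) + (a + b) \<le> n"
    by (metis div_times_less_eq_dividend mult_Suc add.commute)
  then have "circ_indep {a, b} n {x. x < m * (a + b) \<and> x mod (a + b) \<in> F}"
    by (intro circ_indep_periodic[OF F(1)]) auto
  moreover have "F \<subseteq> {..<a + b}" using F(1) by (auto simp: circ_indep_def)
  ultimately show ?thesis
    using card_le_circ_alpha card_periodic_set F(2) unfolding m_def by metis
qed simp

lemma circ_alpha_pair_deviation_le:
  assumes "coprime a b"
  shows "\<bar>real (circ_alpha {a, b} n) - real ((a + b) div 2) / real (a + b) * real n\<bar>
           \<le> 2 * real (a + b)"
proof -
  define s where "s = a + b"
  define k where "k = s div 2"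
  define q where "q = n div s"
  define r where "r = n mod s"
  have "s > 0" using assms by (cases "s = 0") (auto simp: s_def)
  then have "r < s" by (simp add: r_def)
  have "k \<le> s" by (simp add: k_def)
  have "real n = real q * real s + real r"
    unfolding q_def r_def by (metis div_mult_mod_eq of_nat_add of_nat_mult)
  then have "real k / real s * real n = real q * real k + real k * real r / real s"
    using \<open>s > 0\<close> by (simp add: field_simps)
  moreover have "real k * real r / real s \<le> real r"
    using \<open>k \<le> s\<close> \<open>s > 0\<close> by (simp add: divide_le_eq mult.commute[of "real r"] mult_right_mono)
  moreover have "0 \<le> real k * real r / real s" by simp
  moreover have "real q * real k - real k \<le> real (circ_alpha {a, b} n)"
  proof -
    have "real q * real k - real k \<le> real ((q - 1) * k)"
      by (cases q) (simp_all add: algebra_simps)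
    with circ_alpha_pair_ge[OF assms, of n] show ?thesis
      unfolding q_def s_def k_def by linarith
  qed
  moreover have "real (circ_alpha {a, b} n) \<le> real q * real k + real r"
    using circ_alpha_pair_le[of a b n] unfolding q_def r_def s_def k_def
    by (metis of_nat_add of_nat_le_iff of_nat_mult)
  moreover have "real r \<le> real s" "real k \<le> real s"
    using \<open>r < s\<close> \<open>k \<le> s\<close> by simp_all
  ultimately have "\<bar>real (circ_alpha {a, b} n) - real k / real s * real n\<bar> \<le> 2 * real s"
    unfolding abs_le_iff by linarith
  then show ?thesis unfolding s_def k_def .
qed

lemma LIMSEQ_div_of_bounded_deviation:
  fixes f :: "nat \<Rightarrow> real"
  assumes "\<And>n. \<bar>f n - c * real n\<bar> \<le> C"
  shows "(\<lambda>n. f n / real n) \<longlonglongrightarrow> c"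
proof (rule real_tendsto_sandwich)
  have bounds: "c - C / real n \<le> f n / real n \<and> f n / real n \<le> c + C / real n"
    if "n \<ge> 1" for n
  proof -
    have "f n / real n - c = (f n - c * real n) / real n" using that by (simp add: field_simps)
    then have "\<bar>f n / real n - c\<bar> \<le> C / real n"
      using assms[of n] by (simp add: divide_right_mono)
    then show ?thesis unfolding abs_le_iff by linarith
  qed
  then show "\<forall>\<^sub>F n in sequentially. c - C / real n \<le> f n / real n"
    and "\<forall>\<^sub>F n in sequentially. f n / real n \<le> c + C / real n"
    by (auto intro!: eventually_sequentiallyI[of 1])
  show "(\<lambda>n. c - C / real n) \<longlonglongrightarrow> c" "(\<lambda>n. c + C / real n) \<longlonglongrightarrow> c"
    using tendsto_diff[OF tendsto_const lim_const_over_n[of C], of c]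
      tendsto_add[OF tendsto_const lim_const_over_n[of C], of c] by simp_all
qed

theorem proposition4:
  fixes a b :: nat
  assumes "a \<ge> 1" and "b \<ge> 1" and "coprime a b"
  shows "(\<lambda>n. real (circ_alpha {a, b} n) / real n)
           \<longlonglongrightarrow> real ((a + b) div 2) / real (a + b)"
  using circ_alpha_pair_deviation_le[OF assms(3)] by (rule LIMSEQ_div_of_bounded_deviation)

end
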